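(* Let $p$ be a prime, $n\geq 1$, $\zeta=\zeta_{p^n}$ a primitive $p^n$th root of unity, $T=\mathbb{Z}_{(p)}[\zeta]$ and $t=1-\zeta$. Let $C_{p^n}$ be the cyclic group of order $p^n$ with generator $c$, and consider the localized cyclic Wedderburn embedding \[ \omega_{p^n}\colon T C_{p^n}\longrightarrow\prod_{j\in\mathbb{Z}/p^n}T,\qquad c^i\longmapsto(\zeta^{ij})_{j\in\mathbb{Z}/p^n}\quad(i\in[0,p^n-1]), \] a $T$-linear injective map between free $T$-modules of rank $p^n$. Let $j\in[0,p^n-1]$ and write $j=\sum_{k\ge0}a_kp^k$ with $a_k\in[0,p-1]$. Then the $(j+1)$st $T$-linear elementary divisor of $\omega_{p^n}$ has $t$-adic valuation \[ \sum_{k\geq 0}(a_k-a_{k+1})(k+1)p^k . \]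
   Context: For an injective $T$-linear map $f\colon M\to N$ between free modules of the same finite rank $r$ over a discrete valuation ring $T$ with uniformizer $t$, there are $T$-bases of $M$ and $N$ in which $f$ is diagonal with entries $t^{e_0},\dots,t^{e_{r-1}}$ (times units), $e_0\le\dots\le e_{r-1}$; the $k$th elementary divisor is $t^{e_{k-1}}$, of valuation $e_{k-1}$. $\mathbb{Z}_{(p)}$ is the localization of $\mathbb{Z}$ at $(p)$. *)

theory Defs
  imports Complex_Main "Jordan_Normal_Form.Matrix"
begin

definition Zloc :: "nat \<Rightarrow> complex set" where
  "Zloc p = {of_int a / of_int b | a b. \<not> (int p dvd b)}"

definition zeta :: "nat \<Rightarrow> nat \<Rightarrow> complex" where
  "zeta p n = cis (2 * pi / real (p ^ n))"

definition Tring :: "nat \<Rightarrow> nat \<Rightarrow> complex set" where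
  "Tring p n = {\<Sum>i<m. c i * zeta p n ^ i | m c. \<forall>i. c i \<in> Zloc p}"

definition tunif :: "nat \<Rightarrow> nat \<Rightarrow> complex" where
  "tunif p n = 1 - zeta p n"

definition units_T :: "nat \<Rightarrow> nat \<Rightarrow> complex set" where
  "units_T p n = {u \<in> Tring p n. u \<noteq> 0 \<and> inverse u \<in> Tring p n}"

definition mat_over :: "complex set \<Rightarrow> complex mat \<Rightarrow> bool" where
  "mat_over S A = (\<forall>i < dim_row A. \<forall>j < dim_col A. A $$ (i, j) \<in> S)"

definition GL_T :: "nat \<Rightarrow> nat \<Rightarrow> nat \<Rightarrow> complex mat \<Rightarrow> bool" where
  "GL_T p n N P = (P \<in> carrier_mat N N \<and> mat_over (Tring p n) P \<and>
     (\<exists>P'. P' \<in> carrier_mat N N \<and> mat_over (Tring p n) P' \<and>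
            P * P' = 1\<^sub>m N \<and> P' * P = 1\<^sub>m N))"

text \<open>Matrix of the cyclic Wedderburn embedding omega_{p^n} with respect to the
  T-basis (c^i)_i of T C_{p^n} and the standard basis of prod_j T:
  the coordinate j of the image of c^i is zeta^(i j).\<close>
definition wedderburn_mat :: "nat \<Rightarrow> nat \<Rightarrow> complex mat" where
  "wedderburn_mat p n = mat (p ^ n) (p ^ n) (\<lambda>(j, i). zeta p n ^ (i * j))"

text \<open>e is the (sorted) list of t-adic valuations of the elementary divisors of the
  N x N matrix A over T: there are bases (i.e. P, Q in GL_N(T)) in which A becomes
  diagonal with entries u_k t^(e_k), u_k units, e_0 \<le> ... \<le> e_(N-1).\<close>
definition elem_div_vals :: "nat \<Rightarrow> nat \<Rightarrow> nat \<Rightarrow> complex mat \<Rightarrow> (nat \<Rightarrow> nat) \<Rightarrow> bool" where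
  "elem_div_vals p n N A e =
    ((\<forall>k l. k \<le> l \<and> l < N \<longrightarrow> e k \<le> e l) \<and>
     (\<exists>P Q u. GL_T p n N P \<and> GL_T p n N Q \<and> (\<forall>k<N. u k \<in> units_T p n) \<and>
        P * A * Q = mat N N (\<lambda>(i, k). if i = k then u i * tunif p n ^ e i else 0)))"

definition digit :: "nat \<Rightarrow> nat \<Rightarrow> nat \<Rightarrow> nat" where
  "digit p j k = (j div p ^ k) mod p"

end

theory Submission
  imports Defs "Jordan_Normal_Form.Char_Poly"
begin

text \<open>The Wedderburn matrix W = (zeta ^ (i j)) is a Vandermonde matrix.
  Multiplying it on the right by the unitriangular coefficient matrix of the Newton basis
  N_m = prod_{l<m} (X - zeta ^ l) gives G D, where G is the unitriangular matrix of Gaussian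
  binomial coefficients in zeta and D is diagonal with entries N_m(zeta ^ m) =
  prod_{l<m} (zeta ^ m - zeta ^ l). Both triangular matrices are invertible over T, so D is a
  diagonal form of W. As 1 - zeta ^ i is a unit times t ^ (p ^ v_p(i)), the m-th diagonal entry
  has valuation sum_{d=1..m} p ^ v_p(d), and a recursion on the base-p digits of m turns this into
  the stated formula.

  The valuations of any diagonal form are unique: t ^ (e_0 + ... + e_(k-1)) divides all k x k
  minors of W, and the leading k x k minor of another diagonal form is a unit times
  t ^ (e'_0 + ... + e'_(k-1)). This uses that t is not a unit of T, because p is a unit times a
  power of t while 1/p is not in T, the elements of Z_(p)[zeta] being algebraic integers up to
  denominators prime to p.\<close>

section \<open>Subrings of the field of complex numbers\<close>

locale complex_subring =
  fixes R :: "complex set"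
  assumes zero_mem [simp]: "0 \<in> R" and one_mem [simp]: "1 \<in> R"
    and add_mem: "x \<in> R \<Longrightarrow> y \<in> R \<Longrightarrow> x + y \<in> R"
    and mult_mem: "x \<in> R \<Longrightarrow> y \<in> R \<Longrightarrow> x * y \<in> R"
    and uminus_mem: "x \<in> R \<Longrightarrow> - x \<in> R"
begin

lemma diff_mem: "x \<in> R \<Longrightarrow> y \<in> R \<Longrightarrow> x - y \<in> R"
  using add_mem[of x "- y"] uminus_mem[of y] by simp

lemma sum_mem: "(\<And>i. i \<in> A \<Longrightarrow> f i \<in> R) \<Longrightarrow> sum f A \<in> R"
  by (induct A rule: infinite_finite_induct) (auto intro: add_mem)

lemma prod_mem: "(\<And>i. i \<in> A \<Longrightarrow> f i \<in> R) \<Longrightarrow> prod f A \<in> R"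
  by (induct A rule: infinite_finite_induct) (auto intro: mult_mem)

lemma power_mem: "x \<in> R \<Longrightarrow> x ^ k \<in> R"
  by (induct k) (auto intro: mult_mem)

lemma of_int_mem: "of_int k \<in> R"
proof -
  have "of_nat m \<in> R" for m by (induct m) (auto intro: add_mem)
  then show ?thesis by (cases k rule: int_cases) (auto simp flip: of_nat_Suc intro: uminus_mem)
qed

end

lemma complex_subring_adjoin:
  assumes "complex_subring R"
  shows "complex_subring {poly q z | q. \<forall>i. coeff q i \<in> R}" (is "complex_subring ?S")
proof -
  interpret complex_subring R by fact
  have mem: "poly q z \<in> ?S" if "\<And>i. coeff q i \<in> R" for q
    using that by blast
  show ?thesis
  proof
    show "0 \<in> ?S" "1 \<in> ?S" using mem[of 0] mem[of 1] by simp_all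
    fix x y assume "x \<in> ?S" "y \<in> ?S"
    then obtain a b where ab: "x = poly a z" "y = poly b z" "\<forall>i. coeff a i \<in> R" "\<forall>i. coeff b i \<in> R"
      by blast
    have "poly (a + b) z \<in> ?S" by (rule mem) (use ab in \<open>auto intro: add_mem\<close>)
    moreover have "poly (a * b) z \<in> ?S"
      by (rule mem) (use ab in \<open>auto simp: coeff_mult intro!: sum_mem mult_mem\<close>)
    ultimately show "x + y \<in> ?S" "x * y \<in> ?S" by (simp_all only: ab poly_add poly_mult)
  next
    fix x assume "x \<in> ?S"
    then obtain a where "x = poly a z" "\<forall>i. coeff a i \<in> R" by blast
    moreover have "poly (- a) z \<in> ?S"
      by (rule mem) (use \<open>\<forall>i. coeff a i \<in> R\<close> in \<open>auto intro: uminus_mem\<close>)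
    ultimately show "- x \<in> ?S" by simp
  qed
qed

definition ring_units :: "complex set \<Rightarrow> complex set" where
  "ring_units R = {u \<in> R. u \<noteq> 0 \<and> inverse u \<in> R}"

definition dvd_in :: "complex set \<Rightarrow> complex \<Rightarrow> complex \<Rightarrow> bool" where
  "dvd_in R c x \<longleftrightarrow> (\<exists>y \<in> R. x = c * y)"

text \<open>For the uniformizer t this says that x has t-adic valuation k.\<close>
definition assoc_pow :: "complex set \<Rightarrow> complex \<Rightarrow> nat \<Rightarrow> complex \<Rightarrow> bool" where
  "assoc_pow R t k x \<longleftrightarrow> (\<exists>u \<in> ring_units R. x = u * t ^ k)"

context complex_subring
begin

lemma ring_units_mem: "u \<in> ring_units R \<Longrightarrow> u \<in> R"
  and ring_units_nonzero: "u \<in> ring_units R \<Longrightarrow> u \<noteq> 0"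
  and ring_units_inverse_mem: "u \<in> ring_units R \<Longrightarrow> inverse u \<in> R"
  by (simp_all add: ring_units_def)

lemma ring_unitsI: "u \<in> R \<Longrightarrow> w \<in> R \<Longrightarrow> u * w = 1 \<Longrightarrow> u \<in> ring_units R"
  unfolding ring_units_def using inverse_unique by fastforce

lemma one_ring_unit [simp]: "1 \<in> ring_units R"
  by (rule ring_unitsI[of _ 1]) auto

lemma mult_ring_unit:
  assumes "u \<in> ring_units R" "w \<in> ring_units R"
  shows "u * w \<in> ring_units R"
proof (rule ring_unitsI[of _ "inverse u * inverse w"])
  show "u * w \<in> R" "inverse u * inverse w \<in> R"
    using assms by (auto simp: ring_units_def intro: mult_mem)
  show "u * w * (inverse u * inverse w) = 1"
    using assms unfolding ring_units_def by (simp add: field_simps)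
qed

lemma uminus_ring_unit: "u \<in> ring_units R \<Longrightarrow> - u \<in> ring_units R"
  by (rule ring_unitsI[of _ "- inverse u"]) (auto simp: ring_units_def intro: uminus_mem)

lemma power_ring_unit: "u \<in> ring_units R \<Longrightarrow> u ^ k \<in> ring_units R"
  by (induct k) (auto intro: mult_ring_unit)

lemma prod_ring_unit: "(\<And>i. i \<in> A \<Longrightarrow> f i \<in> ring_units R) \<Longrightarrow> prod f A \<in> ring_units R"
  by (induct A rule: infinite_finite_induct) (auto intro: mult_ring_unit)

lemma assoc_pow_mult:
  "assoc_pow R t a x \<Longrightarrow> assoc_pow R t b y \<Longrightarrow> assoc_pow R t (a + b) (x * y)"
  unfolding assoc_pow_def by (auto simp: power_add ac_simps intro: mult_ring_unit)

lemma assoc_pow_unit_mult: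
  "u \<in> ring_units R \<Longrightarrow> assoc_pow R t k x \<Longrightarrow> assoc_pow R t k (u * x)"
  using assoc_pow_mult[of t 0 u k x] by (simp add: assoc_pow_def)

lemma assoc_pow_prod:
  "(\<And>i. i \<in> A \<Longrightarrow> assoc_pow R t (k i) (f i)) \<Longrightarrow> assoc_pow R t (\<Sum>i\<in>A. k i) (\<Prod>i\<in>A. f i)"
  by (induct A rule: infinite_finite_induct) (auto simp: assoc_pow_mult, auto simp: assoc_pow_def)

lemma dvd_in_0 [simp]: "dvd_in R c 0"
  unfolding dvd_in_def by auto

lemma dvd_in_sum: "(\<And>i. i \<in> A \<Longrightarrow> dvd_in R c (f i)) \<Longrightarrow> dvd_in R c (sum f A)"
proof (induct A rule: infinite_finite_induct)
  case (insert i A)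
  then obtain y z where "y \<in> R" "f i = c * y" "z \<in> R" "sum f A = c * z"
    unfolding dvd_in_def by fastforce
  then have "sum f (insert i A) = c * (y + z)" "y + z \<in> R"
    using insert by (simp_all add: distrib_left add_mem)
  then show ?case unfolding dvd_in_def by blast
qed simp_all

lemma dvd_in_mult_left: "a \<in> R \<Longrightarrow> dvd_in R c x \<Longrightarrow> dvd_in R c (a * x)"
  unfolding dvd_in_def by (metis mult.left_commute mult_mem)

lemma dvd_in_prod_powers:
  "(\<And>i. i \<in> A \<Longrightarrow> dvd_in R (t ^ k i) (f i)) \<Longrightarrow> dvd_in R (t ^ (\<Sum>i\<in>A. k i)) (\<Prod>i\<in>A. f i)"
proof (induct A rule: infinite_finite_induct)
  case (insert i A)
  then obtain y z where "y \<in> R" "f i = t ^ k i * y" "z \<in> R" "(\<Prod>i\<in>A. f i) = t ^ (\<Sum>i\<in>A. k i) * z"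
    unfolding dvd_in_def by fastforce
  then have "(\<Prod>i\<in>insert i A. f i) = t ^ (\<Sum>i\<in>insert i A. k i) * (y * z)" "y * z \<in> R"
    using insert by (simp_all add: power_add ac_simps mult_mem)
  then show ?case unfolding dvd_in_def by blast
qed (auto simp: dvd_in_def)

lemma dvd_in_power_mono:
  assumes "t \<in> R" "dvd_in R (t ^ a) x" "b \<le> a"
  shows "dvd_in R (t ^ b) x"
proof -
  obtain y where "y \<in> R" "x = t ^ a * y" using assms(2) unfolding dvd_in_def by blast
  moreover have "t ^ a * y = t ^ b * (t ^ (a - b) * y)"
    using assms(3) by (simp flip: mult.assoc power_add)
  moreover have "t ^ (a - b) * y \<in> R" using assms(1) \<open>y \<in> R\<close> by (intro mult_mem power_mem)
  ultimately show ?thesis unfolding dvd_in_def by metis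
qed

lemma power_le_if_dvd_in_assoc_pow:
  assumes t: "t \<in> R" "t \<noteq> 0" "inverse t \<notin> R"
    and "dvd_in R (t ^ a) x" "assoc_pow R t b x"
  shows "a \<le> b"
proof (rule ccontr)
  assume "\<not> a \<le> b"
  then obtain d where d: "a = b + Suc d" by (metis add_Suc_right less_imp_Suc_add not_le)
  obtain y u where y: "y \<in> R" "x = t ^ a * y" and u: "u \<in> ring_units R" "x = u * t ^ b"
    using assms(4,5) unfolding dvd_in_def assoc_pow_def by blast
  have "u = t * (t ^ d * y)" using y(2) u(2) t(2) by (simp add: d power_add ac_simps)
  then have "inverse t = t ^ d * y * inverse u"
    using ring_units_nonzero[OF u(1)] t(2) by (simp add: field_simps)
  moreover have "t ^ d * y * inverse u \<in> R"
    using t(1) y(1) ring_units_inverse_mem[OF u(1)] by (intro mult_mem power_mem)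
  ultimately show False using t(3) by simp
qed

lemma geometric_sum_ring_unit:
  assumes e: "e \<in> R" "e ^ M = 1" "e \<noteq> 1" and "coprime k M"
  shows "(\<Sum>s<k. e ^ s) \<in> ring_units R"
proof -
  have "k \<noteq> 0"
  proof
    assume "k = 0"
    then have "M = 1" using \<open>coprime k M\<close> by simp
    then show False using e by simp
  qed
  then obtain x y where "k * x = M * y + gcd k M" using bezout_nat by blast
  then have xy: "k * x = M * y + 1" using \<open>coprime k M\<close> by simp
  \<comment> \<open>e ^ k has the inverse power e ^ (k x) = e, so 1 - e ^ k divides 1 - e in R.\<close>
  have "e ^ (k * x) = e" unfolding xy using e(2) by (simp add: power_add power_mult)
  then have "(1 - e) * ((\<Sum>s<k. e ^ s) * (\<Sum>s<x. (e ^ k) ^ s)) = (1 - e) * 1"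
    using one_diff_power_eq[of e k] one_diff_power_eq[of "e ^ k" x]
    by (simp add: power_mult mult.assoc)
  then have "(\<Sum>s<k. e ^ s) * (\<Sum>s<x. (e ^ k) ^ s) = 1" using e(3) by simp
  then show ?thesis using e(1) by (intro ring_unitsI) (auto intro!: sum_mem power_mem)
qed

end

section \<open>Uniqueness of the exponents of elementary divisors\<close>

definition invertible_over :: "complex set \<Rightarrow> nat \<Rightarrow> complex mat \<Rightarrow> bool" where
  "invertible_over R N P \<longleftrightarrow> P \<in> carrier_mat N N \<and> mat_over R P \<and>
     (\<exists>P'. P' \<in> carrier_mat N N \<and> mat_over R P' \<and> P * P' = 1\<^sub>m N \<and> P' * P = 1\<^sub>m N)"

definition elem_div_exps ::
    "complex set \<Rightarrow> complex \<Rightarrow> nat \<Rightarrow> complex mat \<Rightarrow> (nat \<Rightarrow> nat) \<Rightarrow> bool" where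
  "elem_div_exps R t N A e \<longleftrightarrow>
    (\<forall>k l. k \<le> l \<and> l < N \<longrightarrow> e k \<le> e l) \<and>
    (\<exists>P Q u. invertible_over R N P \<and> invertible_over R N Q \<and> (\<forall>k<N. u k \<in> ring_units R) \<and>
       P * A * Q = mat N N (\<lambda>(i, k). if i = k then u i * t ^ e i else 0))"

lemma elem_div_vals_eq_elem_div_exps: "elem_div_vals p n = elem_div_exps (Tring p n) (tunif p n)"
  by (intro ext) (simp add: elem_div_vals_def elem_div_exps_def GL_T_def invertible_over_def
      units_T_def ring_units_def)

definition minors_dvd_in :: "complex set \<Rightarrow> complex \<Rightarrow> complex mat \<Rightarrow> nat \<Rightarrow> bool" where
  "minors_dvd_in R c M k \<longleftrightarrow> (\<forall>f g. (\<forall>i<k. f i < dim_row M) \<longrightarrow> (\<forall>j<k. g j < dim_col M) \<longrightarrow>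
     dvd_in R c (det (mat k k (\<lambda>(i, j). M $$ (f i, g j)))))"

lemma sum_lessThan_le_sum_sorted:
  fixes e :: "nat \<Rightarrow> nat"
  assumes sorted: "\<And>i j. i \<le> j \<Longrightarrow> j < N \<Longrightarrow> e i \<le> e j" and "S \<subseteq> {..<N}"
  shows "(\<Sum>i<card S. e i) \<le> (\<Sum>x\<in>S. e x)"
  using assms(2)
proof (induct "card S" arbitrary: S)
  case (Suc c)
  have fin: "finite S" using Suc.prems finite_subset by blast
  then have "S \<noteq> {}" using Suc.hyps(2) by auto
  define m where "m = Max S"
  have m: "m \<in> S" "m < N" unfolding m_def using fin \<open>S \<noteq> {}\<close> Suc.prems by auto
  have "S \<subseteq> {..m}" unfolding m_def using fin by auto
  then have "c \<le> m" using card_mono[of "{..m}" S] Suc.hyps(2) by simp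
  have "card (S - {m}) = c" using Suc.hyps(2) fin m(1) by simp
  then have "(\<Sum>i<Suc c. e i) = e c + (\<Sum>i<card (S - {m}). e i)" by simp
  also have "\<dots> \<le> e m + (\<Sum>x\<in>S - {m}. e x)"
    using Suc.hyps(1)[of "S - {m}"] Suc.hyps(2) Suc.prems sorted[OF \<open>c \<le> m\<close> m(2)] fin m(1) by fastforce
  also have "\<dots> = (\<Sum>x\<in>S. e x)" using sum.remove[OF fin m(1), of e] by simp
  finally show ?case using Suc.hyps(2) by simp
qed simp

context complex_subring
begin

lemma det_mem:
  assumes "M \<in> carrier_mat N N" "mat_over R M"
  shows "det M \<in> R"
  using assms unfolding det_def'[OF assms(1)] mat_over_def
  by (auto simp: permutes_in_image intro!: sum_mem mult_mem prod_mem of_int_mem)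

lemma mat_over_adj_mat:
  assumes M: "M \<in> carrier_mat N N" and "mat_over R M"
  shows "mat_over R (adj_mat M)"
  unfolding mat_over_def
proof (intro allI impI)
  fix i j assume "i < dim_row (adj_mat M)" "j < dim_col (adj_mat M)"
  then have ij: "i < N" "j < N" using M by (auto simp: adj_mat_def)
  have "mat_over R (mat_delete M j i)"
    using assms ij unfolding mat_over_def mat_delete_def by auto
  then have "det (mat_delete M j i) \<in> R" by (rule det_mem[OF mat_delete_carrier[OF M]])
  then show "adj_mat M $$ (i, j) \<in> R"
    using M ij unfolding adj_mat_def cofactor_def by (auto intro!: mult_mem power_mem uminus_mem)
qed

lemma invertible_over_det_one:
  assumes M: "M \<in> carrier_mat N N" and MR: "mat_over R M" and det: "det M = 1"
  shows "invertible_over R N M" "invertible_over R N (adj_mat M)" "adj_mat M * M = 1\<^sub>m N"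
proof -
  have "M * adj_mat M = 1\<^sub>m N" "adj_mat M * M = 1\<^sub>m N" using adj_mat[OF M] det by auto
  moreover note adj_mat(1)[OF M] mat_over_adj_mat[OF M MR]
  ultimately show "invertible_over R N M" "invertible_over R N (adj_mat M)" "adj_mat M * M = 1\<^sub>m N"
    using M MR unfolding invertible_over_def by blast+
qed

lemma minors_dvd_in_mult_left:
  assumes MD: "minors_dvd_in R d M k"
    and X: "X \<in> carrier_mat a b" and M: "M \<in> carrier_mat b c" and XR: "mat_over R X"
  shows "minors_dvd_in R d (X * M) k"
  unfolding minors_dvd_in_def
proof (intro allI impI)
  fix f g assume f: "\<forall>i<k. f i < dim_row (X * M)" and g: "\<forall>j<k. g j < dim_col (X * M)"
  define X' where "X' = mat k b (\<lambda>(i, l). X $$ (f i, l))"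
  define M' where "M' = mat b k (\<lambda>(l, j). M $$ (l, g j))"
  have X': "X' \<in> carrier_mat k b" and M': "M' \<in> carrier_mat b k" unfolding X'_def M'_def by auto
  have eq: "mat k k (\<lambda>(i, j). (X * M) $$ (f i, g j)) = X' * M'"
    by (rule eq_matI) (use f g M X in \<open>auto simp: X'_def M'_def scalar_prod_def\<close>)
  define H where "H = {h. (\<forall>i\<in>{0..<k}. h i \<in> {0..<b}) \<and> (\<forall>i. i \<notin> {0..<k} \<longrightarrow> h i = i)}"
  \<comment> \<open>Expanding each row of X' M' as a combination of rows of M' writes the minor as an
    R-linear combination of k-minors of M.\<close>
  have "det (X' * M') = (\<Sum>h\<in>H. det (mat\<^sub>r k k (\<lambda>i. X' $$ (i, h i) \<cdot>\<^sub>v row M' (h i))))"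
    unfolding mat_mul_finsum_alt[OF X' M'] H_def
    by (rule det_linear_rows_sum) (use M' in auto)
  also have "\<dots> = (\<Sum>h\<in>H. (\<Prod>i\<in>{0..<k}. X' $$ (i, h i)) * det (mat\<^sub>r k k (\<lambda>i. row M' (h i))))"
    by (intro sum.cong refl det_rows_mul) (use M' in auto)
  finally have expand: "det (X' * M') = \<dots>" .
  have "dvd_in R d ((\<Prod>i\<in>{0..<k}. X' $$ (i, h i)) * det (mat\<^sub>r k k (\<lambda>i. row M' (h i))))"
    if h: "h \<in> H" for h
  proof (rule dvd_in_mult_left)
    show "(\<Prod>i\<in>{0..<k}. X' $$ (i, h i)) \<in> R"
      using h f XR X unfolding H_def X'_def mat_over_def by (auto intro!: prod_mem)
    have "mat\<^sub>r k k (\<lambda>i. row M' (h i)) = mat k k (\<lambda>(i, j). M $$ (h i, g j))"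
      by (rule eq_matI) (use h M' in \<open>auto simp: H_def M'_def\<close>)
    then show "dvd_in R d (det (mat\<^sub>r k k (\<lambda>i. row M' (h i))))"
      using MD g h M X unfolding minors_dvd_in_def H_def by auto
  qed
  then show "dvd_in R d (det (mat k k (\<lambda>(i, j). (X * M) $$ (f i, g j))))"
    unfolding eq expand by (rule dvd_in_sum)
qed

lemma minors_dvd_in_transpose:
  assumes "minors_dvd_in R d M k"
  shows "minors_dvd_in R d (transpose_mat M) k"
  unfolding minors_dvd_in_def
proof (intro allI impI)
  fix f g assume f: "\<forall>i<k. f i < dim_row (transpose_mat M)" and g: "\<forall>j<k. g j < dim_col (transpose_mat M)"
  have "mat k k (\<lambda>(i, j). transpose_mat M $$ (f i, g j)) = transpose_mat (mat k k (\<lambda>(i, j). M $$ (g i, f j)))"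
    by (rule eq_matI) (use f g in auto)
  then have "det (mat k k (\<lambda>(i, j). transpose_mat M $$ (f i, g j))) = det (mat k k (\<lambda>(i, j). M $$ (g i, f j)))"
    by (simp add: det_transpose[of _ k])
  then show "dvd_in R d (det (mat k k (\<lambda>(i, j). transpose_mat M $$ (f i, g j))))"
    using assms f g unfolding minors_dvd_in_def by auto
qed

lemma minors_dvd_in_mult_right:
  assumes MD: "minors_dvd_in R d M k"
    and M: "M \<in> carrier_mat a b" and Y: "Y \<in> carrier_mat b c" and YR: "mat_over R Y"
  shows "minors_dvd_in R d (M * Y) k"
proof -
  have "minors_dvd_in R d (transpose_mat Y * transpose_mat M) k"
    by (rule minors_dvd_in_mult_left[OF minors_dvd_in_transpose[OF MD]])
       (use M Y YR in \<open>auto simp: mat_over_def\<close>)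
  then have "minors_dvd_in R d (transpose_mat (transpose_mat Y * transpose_mat M)) k"
    by (rule minors_dvd_in_transpose)
  then show ?thesis using transpose_mult[OF M Y] by (metis transpose_transpose)
qed

lemma dvd_in_det_row_powers:
  assumes M: "M \<in> carrier_mat k k"
    and rows: "\<And>i j. i < k \<Longrightarrow> j < k \<Longrightarrow> dvd_in R (t ^ a i) (M $$ (i, j))"
  shows "dvd_in R (t ^ (\<Sum>i<k. a i)) (det M)"
  unfolding det_def'[OF M] lessThan_atLeast0
proof (rule dvd_in_sum)
  fix q assume "q \<in> {q. q permutes {0..<k}}"
  then have "q i < k" if "i < k" for i using that by (auto simp: permutes_in_image)
  then show "dvd_in R (t ^ (\<Sum>i\<in>{0..<k}. a i)) (signof q * (\<Prod>i\<in>{0..<k}. M $$ (i, q i)))"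
    using rows by (intro dvd_in_mult_left[OF of_int_mem] dvd_in_prod_powers) auto
qed

lemma minors_dvd_in_diag:
  assumes t: "t \<in> R" and u: "\<And>i. i < N \<Longrightarrow> u i \<in> R"
    and sorted: "\<And>i j. i \<le> j \<Longrightarrow> j < N \<Longrightarrow> e i \<le> e j"
  shows "minors_dvd_in R (t ^ (\<Sum>i<k. e i)) (mat N N (\<lambda>(i, j). if i = j then u i * t ^ e i else 0)) k"
  unfolding minors_dvd_in_def
proof (intro allI impI)
  define D where "D = mat N N (\<lambda>(i, j). if i = j then u i * t ^ e i else 0)"
  fix f g assume f: "\<forall>i<k. f i < dim_row D" and g: "\<forall>j<k. g j < dim_col D"
  define M where "M = mat k k (\<lambda>(i, j). D $$ (f i, g j))"
  have M: "M \<in> carrier_mat k k" unfolding M_def by simp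
  have "dvd_in R (t ^ (\<Sum>i<k. e i)) (det M)"
  proof (cases "inj_on f {..<k}")
    case False
    then obtain i i' where "i < k" "i' < k" "f i = f i'" "i \<noteq> i'" unfolding inj_on_def by auto
    then have "det M = 0" by (intro det_identical_rows[OF M, of i i']) (auto simp: M_def)
    then show ?thesis by simp
  next
    case True
    \<comment> \<open>Row i is divisible by t ^ e (f i), and the f i are k distinct indices.\<close>
    have "(\<Sum>i<card (f ` {..<k}). e i) \<le> (\<Sum>x\<in>f ` {..<k}. e x)"
      by (rule sum_lessThan_le_sum_sorted[where N = N]) (use sorted f in \<open>auto simp: D_def\<close>)
    then have le: "(\<Sum>i<k. e i) \<le> (\<Sum>i<k. e (f i))" using True by (simp add: card_image sum.reindex)
    have "dvd_in R (t ^ e (f i)) (M $$ (i, j))" if "i < k" "j < k" for i j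
    proof -
      have "M $$ (i, j) = t ^ e (f i) * (if f i = g j then u (f i) else 0)"
        using that f g by (simp add: M_def D_def ac_simps)
      moreover have "f i < N" using f that by (simp add: D_def)
      then have "(if f i = g j then u (f i) else 0) \<in> R" using u by simp
      ultimately show ?thesis unfolding dvd_in_def by blast
    qed
    then show ?thesis by (rule dvd_in_power_mono[OF t dvd_in_det_row_powers[OF M] le])
  qed
  then show "dvd_in R (t ^ (\<Sum>i<k. e i)) (det (mat k k (\<lambda>(i, j). D $$ (f i, g j))))"
    unfolding M_def .
qed

lemma elem_div_expsE:
  assumes "elem_div_exps R t N A e"
  obtains P P' Q Q' u where "\<And>i j. i \<le> j \<Longrightarrow> j < N \<Longrightarrow> e i \<le> e j"
    "P \<in> carrier_mat N N" "mat_over R P" "P' \<in> carrier_mat N N" "mat_over R P'" "P' * P = 1\<^sub>m N"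
    "Q \<in> carrier_mat N N" "mat_over R Q" "Q' \<in> carrier_mat N N" "mat_over R Q'" "Q * Q' = 1\<^sub>m N"
    "\<And>i. i < N \<Longrightarrow> u i \<in> ring_units R"
    "P * A * Q = mat N N (\<lambda>(i, j). if i = j then u i * t ^ e i else 0)"
proof -
  from assms have sorted: "\<forall>k l. k \<le> l \<and> l < N \<longrightarrow> e k \<le> e l"
    and "\<exists>P Q u. invertible_over R N P \<and> invertible_over R N Q \<and> (\<forall>k<N. u k \<in> ring_units R) \<and>
       P * A * Q = mat N N (\<lambda>(i, k). if i = k then u i * t ^ e i else 0)"
    unfolding elem_div_exps_def by simp_all
  then obtain P Q u where P: "invertible_over R N P" and Q: "invertible_over R N Q"
    and u: "\<forall>k<N. u k \<in> ring_units R"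
    and D: "P * A * Q = mat N N (\<lambda>(i, k). if i = k then u i * t ^ e i else 0)"
    by blast
  from P obtain P' where "P \<in> carrier_mat N N" "mat_over R P" "P' \<in> carrier_mat N N"
    "mat_over R P'" "P' * P = 1\<^sub>m N" unfolding invertible_over_def by blast
  moreover from Q obtain Q' where "Q \<in> carrier_mat N N" "mat_over R Q" "Q' \<in> carrier_mat N N"
    "mat_over R Q'" "Q * Q' = 1\<^sub>m N" unfolding invertible_over_def by blast
  ultimately show thesis using that[of P P' Q Q' u] sorted u D by blast
qed

lemma elem_div_exps_minors_dvd_in:
  assumes t: "t \<in> R" and A: "A \<in> carrier_mat N N" and E: "elem_div_exps R t N A e"
  shows "minors_dvd_in R (t ^ (\<Sum>i<k. e i)) A k"
proof -
  obtain P P' Q Q' u where sorted: "\<And>i j. i \<le> j \<Longrightarrow> j < N \<Longrightarrow> e i \<le> e j"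
    and P: "P \<in> carrier_mat N N" "mat_over R P" "P' \<in> carrier_mat N N" "mat_over R P'" "P' * P = 1\<^sub>m N"
    and Q: "Q \<in> carrier_mat N N" "mat_over R Q" "Q' \<in> carrier_mat N N" "mat_over R Q'" "Q * Q' = 1\<^sub>m N"
    and u: "\<And>i. i < N \<Longrightarrow> u i \<in> ring_units R"
    and D: "P * A * Q = mat N N (\<lambda>(i, j). if i = j then u i * t ^ e i else 0)"
    using elem_div_expsE[OF E] by blast
  have PAQ: "P * A * Q \<in> carrier_mat N N" using P Q A by simp
  have "P' * (P * A * Q) * Q' = P' * (P * (A * Q)) * Q'"
    using assoc_mult_mat[OF P(1) A Q(1)] by simp
  also have "\<dots> = (P' * P) * (A * Q) * Q'"
    using assoc_mult_mat[OF P(3,1), of "A * Q" N] A Q by simp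
  also have "\<dots> = A * (Q * Q')"
    using P(5) assoc_mult_mat[OF A Q(1,3)] A by simp
  finally have A_eq: "P' * (P * A * Q) * Q' = A" using Q(5) A by simp
  have "minors_dvd_in R (t ^ (\<Sum>i<k. e i)) (P * A * Q) k"
    unfolding D by (rule minors_dvd_in_diag[OF t _ sorted]) (use u ring_units_mem in auto)
  then have "minors_dvd_in R (t ^ (\<Sum>i<k. e i)) (P' * (P * A * Q)) k"
    by (rule minors_dvd_in_mult_left[OF _ P(3) PAQ P(4)])
  then have "minors_dvd_in R (t ^ (\<Sum>i<k. e i)) (P' * (P * A * Q) * Q') k"
    by (rule minors_dvd_in_mult_right[where a = N, OF _ _ Q(3,4)]) (use P PAQ in simp)
  then show ?thesis unfolding A_eq .
qed

lemma elem_div_exps_sum_le: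
  assumes t: "t \<in> R" "t \<noteq> 0" "inverse t \<notin> R" and A: "A \<in> carrier_mat N N"
    and E: "elem_div_exps R t N A e" and E': "elem_div_exps R t N A e'" and k: "k \<le> N"
  shows "(\<Sum>i<k. e i) \<le> (\<Sum>i<k. e' i)"
proof -
  obtain P P' Q Q' u where "\<And>i j. i \<le> j \<Longrightarrow> j < N \<Longrightarrow> e' i \<le> e' j"
    and P: "P \<in> carrier_mat N N" "mat_over R P" "P' \<in> carrier_mat N N" "mat_over R P'" "P' * P = 1\<^sub>m N"
    and Q: "Q \<in> carrier_mat N N" "mat_over R Q" "Q' \<in> carrier_mat N N" "mat_over R Q'" "Q * Q' = 1\<^sub>m N"
    and u: "\<And>i. i < N \<Longrightarrow> u i \<in> ring_units R"
    and D: "P * A * Q = mat N N (\<lambda>(i, j). if i = j then u i * t ^ e' i else 0)"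
    using elem_div_expsE[OF E'] by blast
  have "minors_dvd_in R (t ^ (\<Sum>i<k. e i)) (P * A) k"
    by (rule minors_dvd_in_mult_left[OF elem_div_exps_minors_dvd_in[OF t(1) A E] P(1) A P(2)])
  then have minors: "minors_dvd_in R (t ^ (\<Sum>i<k. e i)) (P * A * Q) k"
    by (rule minors_dvd_in_mult_right[where a = N, OF _ _ Q(1,2)]) (use P A in simp)
  have "dvd_in R (t ^ (\<Sum>i<k. e i)) (det (mat k k (\<lambda>(i, j). (P * A * Q) $$ (i, j))))"
    using minors[unfolded minors_dvd_in_def, rule_format, of "\<lambda>i. i" "\<lambda>j. j"] k P Q A by simp
  moreover have "assoc_pow R t (\<Sum>i<k. e' i) (det (mat k k (\<lambda>(i, j). (P * A * Q) $$ (i, j))))"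
  proof -
    let ?M = "mat k k (\<lambda>(i, j). (P * A * Q) $$ (i, j))"
    have "upper_triangular ?M" using k unfolding upper_triangular_def D by auto
    then have "det ?M = (\<Prod>i<k. ?M $$ (i, i))"
      by (simp add: det_upper_triangular[of _ k] prod_list_diag_prod lessThan_atLeast0)
    also have "\<dots> = (\<Prod>i<k. u i * t ^ e' i)" using k unfolding D by (intro prod.cong) auto
    finally show ?thesis using u k
      by (auto simp: assoc_pow_def prod.distrib power_sum intro!: bexI[of _ "\<Prod>i<k. u i"] prod_ring_unit)
  qed
  ultimately show ?thesis by (rule power_le_if_dvd_in_assoc_pow[OF t])
qed

lemma elem_div_exps_unique:
  assumes "t \<in> R" "t \<noteq> 0" "inverse t \<notin> R" "A \<in> carrier_mat N N"
    and "elem_div_exps R t N A e" "elem_div_exps R t N A e'" "i < N"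
  shows "e i = e' i"
proof -
  have "(\<Sum>j<k. e j) = (\<Sum>j<k. e' j)" if "k \<le> N" for k
    using elem_div_exps_sum_le[OF assms(1-6) that] elem_div_exps_sum_le[OF assms(1-4,6,5) that]
    by simp
  from this[of "Suc i"] this[of i] assms(7) show ?thesis by simp
qed

end

section \<open>The Vandermonde matrix in the Newton basis\<close>

definition newton_eval :: "'a::comm_ring_1 \<Rightarrow> nat \<Rightarrow> nat \<Rightarrow> 'a" where
  "newton_eval z j m = (\<Prod>l<m. z ^ j - z ^ l)"

fun qbinomial :: "'a::comm_ring_1 \<Rightarrow> nat \<Rightarrow> nat \<Rightarrow> 'a" where
  "qbinomial z j 0 = 1"
| "qbinomial z 0 (Suc m) = 0"
| "qbinomial z (Suc j) (Suc m) = qbinomial z j m + z ^ Suc m * qbinomial z j (Suc m)"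

lemma qbinomial_eq_0: "j < m \<Longrightarrow> qbinomial z j m = 0"
  by (induct z j m rule: qbinomial.induct) auto

lemma qbinomial_same [simp]: "qbinomial z j j = 1"
  by (induct j) (auto simp: qbinomial_eq_0)

lemma newton_eval_Suc_Suc: "newton_eval z (Suc j) (Suc m) = (z ^ Suc j - 1) * z ^ m * newton_eval z j m"
proof -
  have "newton_eval z (Suc j) (Suc m) = (z ^ Suc j - 1) * (\<Prod>l<m. z * (z ^ j - z ^ l))"
    unfolding newton_eval_def prod.lessThan_Suc_shift by (simp add: algebra_simps)
  then show ?thesis unfolding newton_eval_def by (simp add: prod.distrib ac_simps)
qed

lemma newton_eval_eq_qbinomial: "newton_eval z j m = qbinomial z j m * newton_eval z m m"
proof (induct j arbitrary: m)
  case 0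
  then show ?case
    by (cases m) (simp_all add: newton_eval_def prod.lessThan_Suc_shift del: prod.lessThan_Suc)
next
  case (Suc j)
  show ?case
  proof (cases m)
    case (Suc m')
    have "newton_eval z (Suc j) (Suc m') = (z ^ Suc j - 1) * z ^ m' * newton_eval z j m'"
      by (rule newton_eval_Suc_Suc)
    also have "\<dots> = qbinomial z j m' * ((z ^ Suc m' - 1) * z ^ m' * newton_eval z m' m')
        + z ^ Suc m' * newton_eval z j (Suc m')"
      unfolding newton_eval_def[of z j "Suc m'"] prod.lessThan_Suc newton_eval_def[of z j m', symmetric]
        Suc.hyps[of m'] by (simp add: algebra_simps)
    also have "\<dots> = qbinomial z (Suc j) (Suc m') * newton_eval z (Suc m') (Suc m')"
      unfolding Suc.hyps[of "Suc m'"] newton_eval_Suc_Suc by (simp add: algebra_simps)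
    finally show ?thesis using Suc by simp
  qed (simp add: newton_eval_def)
qed

definition newton_poly :: "'a::idom \<Rightarrow> nat \<Rightarrow> 'a poly" where
  "newton_poly z m = (\<Prod>l<m. [:- (z ^ l), 1:])"

lemma degree_newton_poly [simp]: "degree (newton_poly z m) = m"
  unfolding newton_poly_def by (subst degree_prod_eq_sum_degree) auto

lemma coeff_newton_poly_same [simp]: "coeff (newton_poly z m) m = 1"
  using lead_coeff_prod[of "\<lambda>l. [:- (z ^ l), 1:]" "{..<m}"] degree_newton_poly[of z m]
  unfolding newton_poly_def by simp

lemma poly_newton_poly_power: "poly (newton_poly z m) (z ^ j) = newton_eval z j m"
  unfolding newton_poly_def newton_eval_def by (simp add: poly_prod)

text \<open>The (j, m) entry of the left-hand side is the m-th Newton polynomial evaluated at z ^ j.\<close>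
lemma vandermonde_newton_factorization:
  fixes z :: "'a::idom"
  shows "mat N N (\<lambda>(j, i). z ^ (i * j)) * mat N N (\<lambda>(i, m). coeff (newton_poly z m) i)
    = mat N N (\<lambda>(j, m). qbinomial z j m) * mat N N (\<lambda>(j, m). if j = m then newton_eval z m m else 0)"
    (is "?V * ?C = ?G * ?D")
proof (rule eq_matI)
  fix j m assume "j < dim_row (?G * ?D)" "m < dim_col (?G * ?D)"
  then have jm: "j < N" "m < N" by auto
  have "(\<Sum>i<N. z ^ (i * j) * coeff (newton_poly z m) i) = (\<Sum>i<N. coeff (newton_poly z m) i * (z ^ j) ^ i)"
    by (simp add: power_mult[symmetric] mult.commute)
  also have "\<dots> = (\<Sum>i\<le>m. coeff (newton_poly z m) i * (z ^ j) ^ i)"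
    by (rule sum.mono_neutral_right) (use jm in \<open>auto simp: coeff_eq_0\<close>)
  also have "\<dots> = poly (newton_poly z m) (z ^ j)" by (simp add: poly_altdef)
  also have "\<dots> = qbinomial z j m * newton_eval z m m"
    by (simp add: poly_newton_poly_power newton_eval_eq_qbinomial[of z j m])
  finally show "(?V * ?C) $$ (j, m) = (?G * ?D) $$ (j, m)"
    using jm by (simp add: scalar_prod_def lessThan_atLeast0 if_distrib cong: if_cong)
qed auto

lemma det_newton_coeff_mat: "det (mat N N (\<lambda>(i, m). coeff (newton_poly z m) i)) = 1"
proof -
  have "upper_triangular (mat N N (\<lambda>(i, m). coeff (newton_poly z m) i))"
    unfolding upper_triangular_def by (auto simp: coeff_eq_0)
  then show ?thesis by (simp add: det_upper_triangular[of _ N] prod_list_diag_prod)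
qed

lemma det_qbinomial_mat: "det (mat N N (\<lambda>(j, m). qbinomial z j m)) = 1"
  by (subst det_lower_triangular[of N]) (auto simp: qbinomial_eq_0 prod_list_diag_prod)

context complex_subring
begin

lemma coeff_newton_poly_mem: "z \<in> R \<Longrightarrow> coeff (newton_poly z m) i \<in> R"
proof (induct m arbitrary: i)
  case (Suc m)
  have eq: "newton_poly z (Suc m) = newton_poly z m * [:- (z ^ m), 1:]"
    by (simp add: newton_poly_def del: mult_pCons_right)
  have "coeff [:- (z ^ m), 1:] j \<in> R" for j
    using Suc.prems by (cases j) (auto simp: coeff_pCons split: nat.split intro!: uminus_mem power_mem)
  then show ?case unfolding eq coeff_mult using Suc by (intro sum_mem mult_mem) auto
qed (simp add: newton_poly_def)

lemma qbinomial_mem: "z \<in> R \<Longrightarrow> qbinomial z j m \<in> R"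
  by (induct z j m rule: qbinomial.induct) (auto intro!: add_mem mult_mem power_mem)

end

section \<open>Roots of unity and algebraic integers\<close>

lemma power_mod_order: "x ^ N = 1 \<Longrightarrow> x ^ (k mod N) = (x :: 'a::monoid_mult) ^ k"
  by (metis div_mult_mod_eq mult_1 power_add power_mult power_one mult.commute)

lemma prod_linear_roots_unity:
  fixes w :: "'a::idom"
  assumes w: "w ^ M = 1" and inj: "inj_on (\<lambda>s. w ^ s) {..<M}" and M: "M > 0"
  shows "(\<Prod>s<M. [:- (w ^ s), 1:]) = monom 1 M - 1"
proof (rule ccontr)
  define P where "P = (\<Prod>s<M. [:- (w ^ s), 1:])"
  define D where "D = (monom 1 M - 1) - P"
  assume "\<not> ?thesis"
  then have D0: "D \<noteq> 0" unfolding D_def P_def by simp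
  have degP: "degree P = M" unfolding P_def by (subst degree_prod_eq_sum_degree) auto
  have "lead_coeff P = 1" unfolding P_def by (simp add: lead_coeff_prod)
  \<comment> \<open>Both polynomials are monic of degree M, so their difference has degree below M,
    yet it vanishes at the M distinct powers of w.\<close>
  then have "coeff D i = 0" if "i \<ge> M" for i
    using that degP M coeff_eq_0[of P i] unfolding D_def by (cases "i = M") auto
  then have "degree D \<le> M - 1" using M by (intro degree_le) auto
  then have "degree D < M" using M by linarith
  moreover have "(\<lambda>s. w ^ s) ` {..<M} \<subseteq> {x. poly D x = 0}"
  proof clarify
    fix s assume "s < M"
    have "(w ^ s) ^ M = 1" using w by (metis power_mult mult.commute power_one)
    moreover have "poly P (w ^ s) = 0" unfolding P_def poly_prod using \<open>s < M\<close> by (auto intro!: prod_zero)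
    ultimately show "poly D (w ^ s) = 0" unfolding D_def by (simp add: poly_monom)
  qed
  then have "card ((\<lambda>s. w ^ s) ` {..<M}) \<le> card {x. poly D x = 0}"
    by (rule card_mono[OF poly_roots_finite[OF D0]])
  then have "M \<le> card {x. poly D x = 0}" using card_image[OF inj] by simp
  moreover have "card {x. poly D x = 0} \<le> degree D" by (rule card_poly_roots_bound[OF D0])
  ultimately show False by linarith
qed

lemma prod_one_minus_mult_roots_unity:
  fixes w c :: "'a::field"
  assumes "w ^ M = 1" "inj_on (\<lambda>s. w ^ s) {..<M}" "M > 0"
  shows "(\<Prod>s<M. 1 - c * w ^ s) = 1 - c ^ M"
proof (cases "c = 0")
  case False
  have "(\<Prod>s<M. 1 - c * w ^ s) = (\<Prod>s<M. c * (inverse c - w ^ s))"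
    using False by (intro prod.cong) (auto simp: field_simps)
  also have "\<dots> = c ^ M * poly (\<Prod>s<M. [:- (w ^ s), 1:]) (inverse c)"
    by (simp add: prod.distrib poly_prod)
  also have "\<dots> = 1 - c ^ M"
    using False by (simp add: prod_linear_roots_unity[OF assms] poly_monom field_simps)
  finally show ?thesis .
qed (use assms in simp)

lemma prod_one_minus_roots_unity:
  fixes w :: "'a::idom"
  assumes "w ^ M = 1" "inj_on (\<lambda>s. w ^ s) {..<M}" "M > 0"
  shows "(\<Prod>s\<in>{1..<M}. 1 - w ^ s) = of_nat M"
proof -
  have "{..<M} = insert 0 {1..<M}" using assms(3) by auto
  then have "[:-1, 1:] * (\<Prod>s\<in>{1..<M}. [:- (w ^ s), 1:]) = monom 1 M - 1"
    using prod_linear_roots_unity[OF assms] by simp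
  also have "\<dots> = [:-1, 1:] * (\<Sum>s<M. [:0, 1:] ^ s)"
    using power_diff_1_eq[of "[:0, 1:] :: 'a poly" M] by (simp add: monom_altdef one_pCons)
  finally have "(\<Prod>s\<in>{1..<M}. [:- (w ^ s), 1:]) = (\<Sum>s<M. [:0, 1:] ^ s)"
    by (subst (asm) mult_left_cancel) simp_all
  from arg_cong[OF this, of "\<lambda>q. poly q 1"] show ?thesis
    by (simp add: poly_prod poly_sum)
qed

lemma algebraic_int_eigenvalue_int_mat:
  fixes x :: "'a::field_char_0"
  assumes K: "K \<in> carrier_mat N N" and "eigenvalue (map_mat of_int K) x"
  shows "algebraic_int x"
proof -
  have "poly (char_poly (map_mat of_int K)) x = 0"
    using assms eigenvalue_root_char_poly[of "map_mat of_int K" N x] by simp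
  then have "poly (of_int_poly (char_poly K)) x = 0"
    by (simp only: of_int_hom.char_poly_hom[OF K])
  moreover have "lead_coeff (char_poly K) = 1" using degree_monic_char_poly[OF K] by simp
  ultimately show ?thesis unfolding algebraic_int_altdef_ipoly by blast
qed

text \<open>Multiplication by an integer polynomial in a root of unity z acts on the vector of powers
  of z by an integer (circulant) matrix.\<close>
lemma algebraic_int_int_poly_root_unity:
  fixes z :: complex
  assumes z: "z ^ N = 1" and N: "N > 0"
  shows "algebraic_int (\<Sum>i<m. of_int (a i) * z ^ i)"
proof -
  define x where "x = (\<Sum>i<m. of_int (a i) * z ^ i)"
  define K where "K = mat N N (\<lambda>(r, c). \<Sum>i<m. if c = (r + i) mod N then a i else 0)"
  define v where "v = vec N (\<lambda>c. z ^ c)"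
  have "map_mat of_int K *\<^sub>v v = x \<cdot>\<^sub>v v"
  proof (rule eq_vecI)
    fix r assume "r < dim_vec (x \<cdot>\<^sub>v v)"
    then have r: "r < N" by (simp add: v_def)
    have "(map_mat of_int K *\<^sub>v v) $ r = (\<Sum>c<N. \<Sum>i<m. if c = (r + i) mod N then of_int (a i) * z ^ c else 0)"
      using r by (auto simp: K_def v_def scalar_prod_def lessThan_atLeast0 sum_distrib_right
          intro!: sum.cong)
    also have "\<dots> = (\<Sum>i<m. of_int (a i) * z ^ ((r + i) mod N))"
      using N by (subst sum.swap) simp
    also have "\<dots> = z ^ r * x"
      unfolding x_def power_mod_order[OF z] by (simp add: sum_distrib_left power_add algebra_simps)
    finally show "(map_mat of_int K *\<^sub>v v) $ r = (x \<cdot>\<^sub>v v) $ r" using r by (simp add: v_def)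
  qed (simp add: K_def v_def)
  moreover have "v \<noteq> 0\<^sub>v N" using N by (auto simp: v_def dest: arg_cong[of _ _ "\<lambda>v. v $ 0"])
  ultimately have "eigenvalue (map_mat of_int K) x"
    unfolding eigenvalue_def eigenvector_def by (intro exI[of _ v]) (auto simp: K_def v_def)
  moreover have "K \<in> carrier_mat N N" by (simp add: K_def)
  ultimately show ?thesis unfolding x_def by (intro algebraic_int_eigenvalue_int_mat)
qed

section \<open>The ring Z_(p)[zeta]\<close>

lemma ZlocI: "\<not> int p dvd b \<Longrightarrow> of_int a / of_int b \<in> Zloc p"
  unfolding Zloc_def by blast

lemma complex_subring_Zloc:
  assumes "prime p"
  shows "complex_subring (Zloc p)"
proof
  have p: "prime (int p)" using assms by simp
  then have p1: "\<not> int p dvd 1" by (meson not_prime_unit zdvd1_eq)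
  show "0 \<in> Zloc p" "1 \<in> Zloc p" using ZlocI[OF p1, of 0] ZlocI[OF p1, of 1] by simp_all
  fix x y assume "x \<in> Zloc p" "y \<in> Zloc p"
  then obtain a b c d where x: "x = of_int a / of_int b" "\<not> int p dvd b"
    and y: "y = of_int c / of_int d" "\<not> int p dvd d" unfolding Zloc_def by auto
  have "b \<noteq> 0" "d \<noteq> 0" using x y by auto
  have bd: "\<not> int p dvd (b * d)" using x y p by (simp add: prime_dvd_mult_iff)
  have "x + y = of_int (a * d + c * b) / of_int (b * d)" "x * y = of_int (a * c) / of_int (b * d)"
    using \<open>b \<noteq> 0\<close> \<open>d \<noteq> 0\<close> x y by (simp_all add: field_simps)
  then show "x + y \<in> Zloc p" "x * y \<in> Zloc p" by (simp_all only: ZlocI[OF bd])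
  show "- x \<in> Zloc p" using ZlocI[OF x(2), of "- a"] x(1) by simp
qed

lemma Zloc_clear_denominators:
  assumes p: "prime p" and c: "\<And>i. c i \<in> Zloc p"
  shows "\<exists>B a. \<not> int p dvd B \<and> of_int B * (\<Sum>i<m. c i * z ^ i) = (\<Sum>i<m. of_int (a i) * z ^ i)"
proof (induct m)
  case 0
  have "\<not> int p dvd 1" using p by (meson not_prime_unit prime_nat_int_transfer zdvd1_eq)
  then show ?case by (intro exI[of _ 1]) auto
next
  case (Suc m)
  then obtain B a where B: "\<not> int p dvd B" and a: "of_int B * (\<Sum>i<m. c i * z ^ i) = (\<Sum>i<m. of_int (a i) * z ^ i)"
    by blast
  obtain r s where rs: "c m = of_int r / of_int s" "\<not> int p dvd s" using c[of m] unfolding Zloc_def by blast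
  then have "s \<noteq> 0" by auto
  define a' where "a' i = (if i < m then s * a i else B * r)" for i
  have "of_int (B * s) * (\<Sum>i<Suc m. c i * z ^ i) = of_int s * (of_int B * (\<Sum>i<m. c i * z ^ i)) + of_int (B * r) * z ^ m"
    using \<open>s \<noteq> 0\<close> rs by (simp add: algebra_simps)
  also have "\<dots> = (\<Sum>i<Suc m. of_int (a' i) * z ^ i)"
    unfolding a by (simp add: a'_def sum_distrib_left algebra_simps)
  finally have "of_int (B * s) * (\<Sum>i<Suc m. c i * z ^ i) = (\<Sum>i<Suc m. of_int (a' i) * z ^ i)" .
  moreover have "\<not> int p dvd B * s" using B rs(2) p by (simp add: prime_dvd_mult_iff)
  ultimately show ?case by blast
qed

text \<open>1/p is not an algebraic integer, whereas Z_(p)[z] consists of algebraic integers up to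
  denominators prime to p.\<close>
lemma inverse_prime_neq_Zloc_poly_root_unity:
  assumes p: "prime p" and z: "z ^ N = 1" "N > 0" and c: "\<And>i. c i \<in> Zloc p"
  shows "(\<Sum>i<m. c i * z ^ i) \<noteq> inverse (of_nat p)"
proof
  assume eq: "(\<Sum>i<m. c i * z ^ i) = inverse (of_nat p)"
  obtain B a where B: "\<not> int p dvd B" and a: "of_int B * (\<Sum>i<m. c i * z ^ i) = (\<Sum>i<m. of_int (a i) * z ^ i)"
    using Zloc_clear_denominators[where c = c and m = m and z = z, OF p c] by blast
  have "(of_int B / of_int (int p) :: complex) = (\<Sum>i<m. of_int (a i) * z ^ i)"
    using a unfolding eq by (simp add: divide_inverse)
  then have "algebraic_int (of_int B / of_int (int p) :: complex)"
    using algebraic_int_int_poly_root_unity[OF z] by simp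
  moreover have "(of_int B / of_int (int p) :: complex) \<in> \<rat>" by (intro Rats_divide Rats_of_int)
  ultimately have "(of_int B / of_int (int p) :: complex) \<in> \<int>" by (rule rational_algebraic_int_is_int)
  then obtain k where "of_int B / of_int (int p) = (of_int k :: complex)" by (elim Ints_cases)
  moreover have "(of_int (int p) :: complex) \<noteq> 0" using p by (simp add: prime_gt_0_nat)
  ultimately have "(of_int B :: complex) = of_int (int p * k)" by (simp add: field_simps)
  then have "B = int p * k" by (simp only: of_int_eq_iff)
  then show False using B by simp
qed

lemma Tring_eq_poly:
  assumes "prime p"
  shows "Tring p n = {poly q (zeta p n) | q. \<forall>i. coeff q i \<in> Zloc p}"
proof (intro equalityI subsetI)
  fix x assume "x \<in> Tring p n"
  then obtain m c where x: "x = (\<Sum>i<m. c i * zeta p n ^ i)" and c: "\<forall>i. c i \<in> Zloc p"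
    unfolding Tring_def by auto
  have "x = poly (\<Sum>i<m. monom (c i) i) (zeta p n)" unfolding x by (simp add: poly_sum poly_monom)
  moreover have "coeff (\<Sum>i<m. monom (c i) i) i \<in> Zloc p" for i
    using c complex_subring.zero_mem[OF complex_subring_Zloc[OF assms]] by (simp add: coeff_sum)
  ultimately show "x \<in> {poly q (zeta p n) | q. \<forall>i. coeff q i \<in> Zloc p}" by blast
next
  fix x assume "x \<in> {poly q (zeta p n) | q. \<forall>i. coeff q i \<in> Zloc p}"
  then obtain q where "x = poly q (zeta p n)" "\<forall>i. coeff q i \<in> Zloc p" by blast
  moreover have "poly q (zeta p n) = (\<Sum>i<Suc (degree q). coeff q i * zeta p n ^ i)"
    by (simp add: poly_altdef lessThan_Suc_atMost)
  ultimately show "x \<in> Tring p n" unfolding Tring_def by blast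
qed

lemma zeta_power: "zeta p n ^ k = cis (2 * pi * real k / real (p ^ n))"
  unfolding zeta_def DeMoivre by (simp add: ac_simps)

lemma zeta_power_order [simp]: "p > 0 \<Longrightarrow> zeta p n ^ (p ^ n) = 1"
  unfolding zeta_power by simp

lemma inj_on_zeta_power: "p > 0 \<Longrightarrow> inj_on (\<lambda>s. zeta p n ^ s) {..<p ^ n}"
  using bij_betw_imp_inj_on[OF bij_betw_roots_unity[of "p ^ n"]] unfolding zeta_power by simp

lemma zeta_power_eq_1_iff:
  assumes "p > 0"
  shows "zeta p n ^ k = 1 \<longleftrightarrow> p ^ n dvd k"
proof -
  have "zeta p n ^ k = 1 \<longleftrightarrow> zeta p n ^ (k mod p ^ n) = zeta p n ^ 0"
    using power_mod_order[OF zeta_power_order[OF assms]] by simp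
  also have "\<dots> \<longleftrightarrow> k mod p ^ n = 0"
    by (rule inj_on_eq_iff[OF inj_on_zeta_power[OF assms]]) (use assms in auto)
  finally show ?thesis by (simp add: dvd_eq_mod_eq_0)
qed

lemma zeta_power_prime_power:
  assumes "p > 0" "v \<le> n"
  shows "zeta p n ^ (p ^ (n - v)) = zeta p v"
proof -
  have "real (p ^ n) = real (p ^ (n - v)) * real (p ^ v)"
    using assms(2) by (simp flip: power_add)
  then show ?thesis using assms(1) unfolding zeta_power by (simp add: zeta_def)
qed

section \<open>The exponents and base-p digits\<close>

text \<open>The exponent of t in the pivot newton_eval zeta m m = prod_{l<m} (zeta ^ m - zeta ^ l).\<close>
definition wedderburn_exp :: "nat \<Rightarrow> nat \<Rightarrow> nat" where
  "wedderburn_exp p m = (\<Sum>d = 1..m. p ^ multiplicity p d)"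

text \<open>Among 1, ..., j the j - j div p numbers prime to p contribute 1 each, and the
  multiples p d contribute p times the contribution of d.\<close>
lemma wedderburn_exp_rec:
  assumes p: "p > 1"
  shows "int (wedderburn_exp p j) = int j - int (j div p) + int p * int (wedderburn_exp p (j div p))"
proof (induct j)
  case (Suc j)
  have step: "wedderburn_exp p (Suc i) = wedderburn_exp p i + p ^ multiplicity p (Suc i)" for i
    unfolding wedderburn_exp_def by simp
  show ?case
  proof (cases "p dvd Suc j")
    case False
    then have "Suc j div p = j div p" by (simp add: div_Suc dvd_eq_mod_eq_0)
    moreover have "multiplicity p (Suc j) = 0" using False by (rule not_dvd_imp_multiplicity_0)
    ultimately show ?thesis using Suc unfolding step by simp
  next
    case True
    then have J: "Suc j div p = Suc (j div p)" using p by (simp add: div_Suc dvd_eq_mod_eq_0)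
    then have "Suc j = p * Suc (j div p)" using True by (metis dvd_mult_div_cancel)
    moreover have "multiplicity p (p * Suc (j div p)) = Suc (multiplicity p (Suc (j div p)))"
      by (rule multiplicity_times_same) (use p in auto)
    ultimately have "multiplicity p (Suc j) = Suc (multiplicity p (Suc (j div p)))" by simp
    then show ?thesis using Suc unfolding J step by (simp add: algebra_simps)
  qed
qed (simp add: wedderburn_exp_def)

lemma digit_Suc: "digit p j (Suc k) = digit p (j div p) k"
  unfolding digit_def by (simp add: div_mult2_eq)

lemma sum_digits: "j < p ^ m \<Longrightarrow> (\<Sum>k<m. int (digit p j k) * int p ^ k) = int j"
proof (induct m arbitrary: j)
  case (Suc m)
  have "j div p < p ^ m" using Suc.prems by (simp add: less_mult_imp_div_less mult.commute)
  have "(\<Sum>k<Suc m. int (digit p j k) * int p ^ k)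
      = int (digit p j 0) + int p * (\<Sum>k<m. int (digit p (j div p) k) * int p ^ k)"
    unfolding sum.lessThan_Suc_shift digit_Suc by (simp add: sum_distrib_left ac_simps)
  also have "\<dots> = int (j mod p) + int p * int (j div p)"
    using Suc.hyps[OF \<open>j div p < p ^ m\<close>] by (simp add: digit_def)
  also have "\<dots> = int j" by (simp flip: of_nat_mult of_nat_add)
  finally show ?case .
qed simp

lemma sum_digit_differences:
  assumes "J < p ^ Suc n"
  shows "(\<Sum>k\<le>n. (int (digit p J k) - int (digit p J (Suc k))) * int p ^ Suc k)
    = (int p - 1) * int J + int (digit p J 0)"
proof -
  have "p ^ Suc n \<le> p ^ Suc (Suc n)" using assms by (cases p) auto
  then have "(\<Sum>k<Suc (Suc n). int (digit p J k) * int p ^ k) = int J"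
    using assms by (intro sum_digits) linarith
  then have "int (digit p J 0) + (\<Sum>k\<le>n. int (digit p J (Suc k)) * int p ^ Suc k) = int J"
    by (simp add: lessThan_Suc_atMost sum.atMost_Suc_shift del: sum.atMost_Suc)
  moreover have "(\<Sum>k\<le>n. int (digit p J k) * int p ^ Suc k) = int p * (\<Sum>k<Suc n. int (digit p J k) * int p ^ k)"
    by (simp add: lessThan_Suc_atMost sum_distrib_left ac_simps)
  then have "(\<Sum>k\<le>n. int (digit p J k) * int p ^ Suc k) = int p * int J"
    using sum_digits[OF assms] by simp
  ultimately show ?thesis by (simp add: sum_subtractf algebra_simps)
qed

lemma wedderburn_exp_digits:
  assumes p: "p > 1"
  shows "j < p ^ n \<Longrightarrow> int (wedderburn_exp p j)
    = (\<Sum>k\<le>n. (int (digit p j k) - int (digit p j (Suc k))) * int (k + 1) * int p ^ k)"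
proof (induct n arbitrary: j)
  case 0
  then show ?case by (simp add: wedderburn_exp_def digit_def)
next
  case (Suc n)
  define J where "J = j div p"
  have J: "J < p ^ n" using Suc.prems unfolding J_def by (simp add: less_mult_imp_div_less mult.commute)
  let ?d = "\<lambda>k. int (digit p J k) - int (digit p J (Suc k))"
  have "(\<Sum>k\<le>Suc n. (int (digit p j k) - int (digit p j (Suc k))) * int (k + 1) * int p ^ k)
      = int (digit p j 0) - int (digit p J 0) + (\<Sum>k\<le>n. ?d k * int (k + 2) * int p ^ Suc k)"
    unfolding sum.atMost_Suc_shift digit_Suc J_def by simp
  also have "(\<Sum>k\<le>n. ?d k * int (k + 2) * int p ^ Suc k)
      = int p * (\<Sum>k\<le>n. ?d k * int (k + 1) * int p ^ k) + (\<Sum>k\<le>n. ?d k * int p ^ Suc k)"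
    by (simp add: sum_distrib_left sum.distrib[symmetric] algebra_simps)
  also have "(\<Sum>k\<le>n. ?d k * int (k + 1) * int p ^ k) = int (wedderburn_exp p J)"
    using Suc.hyps[OF J] ..
  also have "(\<Sum>k\<le>n. ?d k * int p ^ Suc k) = (int p - 1) * int J + int (digit p J 0)"
    using J p by (intro sum_digit_differences) (simp add: less_le_trans)
  finally show ?case
    using wedderburn_exp_rec[OF p, of j] mod_mult_div_eq[of j p]
    unfolding J_def digit_def by (simp add: algebra_simps flip: of_nat_mult of_nat_add)
qed

section \<open>Valuations in Z_(p)[zeta]\<close>

locale prime_power_cyclotomic =
  fixes p n :: nat
  assumes prime: "prime p" and n_pos: "n > 0"
begin

lemma p_gt_1: "p > 1"
  using prime by (rule prime_gt_1_nat)

lemma p_pos: "p > 0"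
  using p_gt_1 by simp

sublocale complex_subring "Tring p n"
  unfolding Tring_eq_poly[OF prime] by (rule complex_subring_adjoin[OF complex_subring_Zloc[OF prime]])

lemma zeta_mem: "zeta p n \<in> Tring p n"
  using Tring_eq_poly[OF prime, of n] complex_subring.zero_mem[OF complex_subring_Zloc[OF prime]]
    complex_subring.one_mem[OF complex_subring_Zloc[OF prime]]
  by (auto intro!: exI[of _ "[:0, 1:]"] simp: coeff_pCons split: nat.split)

lemma tunif_mem: "tunif p n \<in> Tring p n"
  unfolding tunif_def using zeta_mem by (intro diff_mem one_mem)

lemma zeta_ne_1: "zeta p n \<noteq> 1"
  using zeta_power_eq_1_iff[OF p_pos, of n 1] n_pos p_gt_1 by auto

lemma tunif_nonzero: "tunif p n \<noteq> 0"
  using zeta_ne_1 by (simp add: tunif_def)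

lemma zeta_ring_unit: "zeta p n \<in> ring_units (Tring p n)"
proof (rule ring_unitsI)
  show "zeta p n * zeta p n ^ (p ^ n - 1) = 1"
    using zeta_power_order[OF p_pos, of n] p_pos by (simp flip: power_Suc)
qed (use zeta_mem in \<open>auto intro: power_mem\<close>)

lemma one_minus_zeta_power_coprime:
  assumes "coprime k p"
  shows "assoc_pow (Tring p n) (tunif p n) 1 (1 - zeta p n ^ k)"
proof -
  have "coprime k (p ^ n)" using assms by simp
  then have "(\<Sum>s<k. zeta p n ^ s) \<in> ring_units (Tring p n)"
    by (rule geometric_sum_ring_unit[OF zeta_mem zeta_power_order[OF p_pos] zeta_ne_1])
  moreover have "1 - zeta p n ^ k = (\<Sum>s<k. zeta p n ^ s) * tunif p n ^ 1"
    unfolding tunif_def one_diff_power_eq by simp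
  ultimately show ?thesis unfolding assoc_pow_def by blast
qed

text \<open>Factoring 1 - X ^ (p ^ v) over the p ^ v-th roots of unity writes 1 - zeta ^ (p ^ v k) as a
  product of p ^ v factors 1 - zeta ^ k', each with k' prime to p.\<close>
lemma one_minus_zeta_power_prime_power_mult:
  assumes "v < n" "\<not> p dvd k"
  shows "assoc_pow (Tring p n) (tunif p n) (p ^ v) (1 - zeta p n ^ (p ^ v * k))"
proof -
  define w where "w = zeta p n ^ (p ^ (n - v))"
  have w: "w ^ (p ^ v) = 1" "inj_on (\<lambda>s. w ^ s) {..<p ^ v}"
    unfolding w_def zeta_power_prime_power[OF p_pos \<open>v < n\<close>[THEN less_imp_le]]
    using zeta_power_order[OF p_pos] inj_on_zeta_power[OF p_pos] by auto
  have "(zeta p n ^ k) ^ p ^ v = zeta p n ^ (p ^ v * k)"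
    by (simp add: mult.commute[of "p ^ v"] power_mult)
  then have "1 - zeta p n ^ (p ^ v * k) = (\<Prod>s<p ^ v. 1 - zeta p n ^ k * w ^ s)"
    using prod_one_minus_mult_roots_unity[OF w p_pos[THEN zero_less_power]] by simp
  also have "\<dots> = (\<Prod>s<p ^ v. 1 - zeta p n ^ (k + p ^ (n - v) * s))"
    unfolding w_def by (simp add: power_add power_mult)
  finally have eq: "1 - zeta p n ^ (p ^ v * k) = \<dots>" .
  have "assoc_pow (Tring p n) (tunif p n) 1 (1 - zeta p n ^ (k + p ^ (n - v) * s))" for s
  proof (rule one_minus_zeta_power_coprime)
    have "p dvd p ^ (n - v) * s" using \<open>v < n\<close> by simp
    then have "\<not> p dvd k + p ^ (n - v) * s" using assms(2) by (simp add: dvd_add_left_iff)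
    then show "coprime (k + p ^ (n - v) * s) p"
      using prime by (simp add: prime_imp_coprime coprime_commute)
  qed
  then have "assoc_pow (Tring p n) (tunif p n) (\<Sum>s<p ^ v. 1) (\<Prod>s<p ^ v. 1 - zeta p n ^ (k + p ^ (n - v) * s))"
    by (intro assoc_pow_prod)
  then show ?thesis unfolding eq by simp
qed

lemma one_minus_zeta_power:
  assumes "\<not> p ^ n dvd i"
  shows "assoc_pow (Tring p n) (tunif p n) (p ^ multiplicity p i) (1 - zeta p n ^ i)"
proof -
  define v where "v = multiplicity p i"
  have "i \<noteq> 0"
  proof
    assume "i = 0"
    with assms show False by simp
  qed
  moreover have "\<not> is_unit p" using p_gt_1 by simp
  ultimately obtain k where i: "i = p ^ v * k" and k: "\<not> p dvd k"
    unfolding v_def by (rule multiplicity_decompose')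
  have "v < n"
  proof (rule ccontr)
    assume "\<not> v < n"
    then have "p ^ n dvd p ^ v" by (simp add: le_imp_power_dvd)
    then show False using assms unfolding i by auto
  qed
  then have "assoc_pow (Tring p n) (tunif p n) (p ^ v) (1 - zeta p n ^ i)"
    unfolding i using k by (rule one_minus_zeta_power_prime_power_mult)
  then show ?thesis by (simp only: v_def)
qed

lemma prime_assoc_pow: "assoc_pow (Tring p n) (tunif p n) ((p - 1) * p ^ (n - 1)) (of_nat p)"
proof -
  define w where "w = zeta p n ^ (p ^ (n - 1))"
  have "w = zeta p 1" unfolding w_def by (rule zeta_power_prime_power[OF p_pos]) (use n_pos in simp)
  then have w: "w ^ p = 1" "inj_on (\<lambda>s. w ^ s) {..<p}"
    using zeta_power_order[OF p_pos, of 1] inj_on_zeta_power[OF p_pos, of 1] by simp_all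
  have "assoc_pow (Tring p n) (tunif p n) (p ^ (n - 1)) (1 - w ^ s)" if "s \<in> {1..<p}" for s
  proof -
    have "\<not> p dvd s" using that by (auto dest: dvd_imp_le)
    then have "multiplicity p (p ^ (n - 1) * s) = n - 1"
      using that prime by (simp add: prime_elem_multiplicity_mult_distrib not_dvd_imp_multiplicity_0)
    moreover have "\<not> p ^ n dvd p ^ (n - 1) * s"
    proof
      assume "p ^ n dvd p ^ (n - 1) * s"
      then have "p ^ (n - 1) * p dvd p ^ (n - 1) * s" using n_pos by (simp flip: power_Suc2)
      then show False using \<open>\<not> p dvd s\<close> p_pos by simp
    qed
    ultimately show ?thesis unfolding w_def power_mult[symmetric]
      using one_minus_zeta_power[of "p ^ (n - 1) * s"] by simp
  qed
  then have "assoc_pow (Tring p n) (tunif p n) (\<Sum>s\<in>{1..<p}. p ^ (n - 1)) (\<Prod>s\<in>{1..<p}. 1 - w ^ s)"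
    by (rule assoc_pow_prod)
  then show ?thesis using prod_one_minus_roots_unity[OF w p_pos] by simp
qed

lemma inverse_prime_notin: "inverse (of_nat p) \<notin> Tring p n"
proof
  assume "inverse (of_nat p) \<in> Tring p n"
  then obtain m c where "inverse (of_nat p) = (\<Sum>i<m. c i * zeta p n ^ i)" and c: "\<forall>i. c i \<in> Zloc p"
    unfolding Tring_def by blast
  moreover have "(\<Sum>i<m. c i * zeta p n ^ i) \<noteq> inverse (of_nat p)"
    by (rule inverse_prime_neq_Zloc_poly_root_unity[OF prime zeta_power_order[OF p_pos]
          zero_less_power[OF p_pos]]) (use c in blast)
  ultimately show False by simp
qed

lemma inverse_tunif_notin: "inverse (tunif p n) \<notin> Tring p n"
proof
  assume t: "inverse (tunif p n) \<in> Tring p n"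
  obtain u where u: "u \<in> ring_units (Tring p n)" "of_nat p = u * tunif p n ^ ((p - 1) * p ^ (n - 1))"
    using prime_assoc_pow unfolding assoc_pow_def by blast
  then have "inverse (of_nat p) = inverse u * inverse (tunif p n) ^ ((p - 1) * p ^ (n - 1))"
    by (simp add: power_inverse)
  moreover have "inverse u * inverse (tunif p n) ^ ((p - 1) * p ^ (n - 1)) \<in> Tring p n"
    using ring_units_inverse_mem[OF u(1)] t by (intro mult_mem power_mem)
  ultimately show False using inverse_prime_notin by simp
qed

lemma newton_eval_zeta_assoc_pow:
  assumes "m < p ^ n"
  shows "assoc_pow (Tring p n) (tunif p n) (wedderburn_exp p m) (newton_eval (zeta p n) m m)"
proof -
  have "assoc_pow (Tring p n) (tunif p n) (p ^ multiplicity p (m - l)) (zeta p n ^ m - zeta p n ^ l)"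
    if "l < m" for l
  proof -
    have "\<not> p ^ n dvd m - l" using that assms by (auto dest: dvd_imp_le)
    then have "assoc_pow (Tring p n) (tunif p n) (p ^ multiplicity p (m - l)) (1 - zeta p n ^ (m - l))"
      by (rule one_minus_zeta_power)
    then have "assoc_pow (Tring p n) (tunif p n) (p ^ multiplicity p (m - l))
        (- (zeta p n ^ l) * (1 - zeta p n ^ (m - l)))"
      by (intro assoc_pow_unit_mult uminus_ring_unit power_ring_unit zeta_ring_unit)
    moreover have "- (zeta p n ^ l) * (1 - zeta p n ^ (m - l)) = zeta p n ^ m - zeta p n ^ l"
      using that by (simp add: algebra_simps flip: power_add)
    ultimately show ?thesis by simp
  qed
  then have "assoc_pow (Tring p n) (tunif p n) (\<Sum>l<m. p ^ multiplicity p (m - l)) (newton_eval (zeta p n) m m)"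
    unfolding newton_eval_def by (intro assoc_pow_prod) simp
  moreover have "(\<Sum>l<m. p ^ multiplicity p (m - l)) = wedderburn_exp p m"
    using sum.nat_diff_reindex[of "\<lambda>d. p ^ multiplicity p (Suc d)" m]
    by (simp add: wedderburn_exp_def sum.atLeast1_atMost_eq Suc_diff_Suc)
  ultimately show ?thesis by simp
qed

lemma wedderburn_elem_div_exps:
  "elem_div_exps (Tring p n) (tunif p n) (p ^ n) (wedderburn_mat p n) (wedderburn_exp p)"
proof -
  define N where "N = p ^ n"
  define C where "C = mat N N (\<lambda>(i, m). coeff (newton_poly (zeta p n) m) i)"
  define G where "G = mat N N (\<lambda>(j, m). qbinomial (zeta p n) j m)"
  have "\<forall>m<N. \<exists>u. u \<in> ring_units (Tring p n) \<and>
      newton_eval (zeta p n) m m = u * tunif p n ^ wedderburn_exp p m"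
    using newton_eval_zeta_assoc_pow unfolding assoc_pow_def N_def by blast
  then obtain u where u: "\<And>m. m < N \<Longrightarrow> u m \<in> ring_units (Tring p n)"
    "\<And>m. m < N \<Longrightarrow> newton_eval (zeta p n) m m = u m * tunif p n ^ wedderburn_exp p m"
    by metis
  have C: "C \<in> carrier_mat N N" "mat_over (Tring p n) C" "det C = 1"
    unfolding C_def mat_over_def using zeta_mem by (auto simp: coeff_newton_poly_mem det_newton_coeff_mat)
  have G: "G \<in> carrier_mat N N" "mat_over (Tring p n) G" "det G = 1"
    unfolding G_def mat_over_def using zeta_mem by (auto simp: qbinomial_mem det_qbinomial_mat)
  have W: "wedderburn_mat p n \<in> carrier_mat N N" by (simp add: wedderburn_mat_def N_def)
  have adjG: "adj_mat G \<in> carrier_mat N N" using adj_mat(1)[OF G(1)] .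
  have "adj_mat G * wedderburn_mat p n * C
      = adj_mat G * (G * mat N N (\<lambda>(j, m). if j = m then newton_eval (zeta p n) m m else 0))"
    using vandermonde_newton_factorization[of N "zeta p n"] assoc_mult_mat[OF adjG W C(1)]
    unfolding wedderburn_mat_def C_def G_def N_def by simp
  also have "\<dots> = mat N N (\<lambda>(i, k). if i = k then u i * tunif p n ^ wedderburn_exp p i else 0)"
    using assoc_mult_mat[OF adjG G(1), of _ N] invertible_over_det_one(3)[OF G]
    by (auto simp: u(2))
  finally have "adj_mat G * wedderburn_mat p n * C = \<dots>" .
  moreover have "wedderburn_exp p k \<le> wedderburn_exp p l" if "k \<le> l" for k l
    using that unfolding wedderburn_exp_def by (intro sum_mono2) auto
  ultimately show ?thesis
    unfolding elem_div_exps_def N_def[symmetric]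
    using invertible_over_det_one(2)[OF G] invertible_over_det_one(1)[OF C] u(1) by blast
qed

end

theorem proposition3p15:
  fixes p n :: nat
  assumes "prime p" and "n \<ge> 1"
  shows "(\<exists>e. elem_div_vals p n (p ^ n) (wedderburn_mat p n) e) \<and>
         (\<forall>e. elem_div_vals p n (p ^ n) (wedderburn_mat p n) e \<longrightarrow>
            (\<forall>j < p ^ n. int (e j) =
               (\<Sum>k\<le>n. (int (digit p j k) - int (digit p j (Suc k))) * int (k + 1) * int p ^ k)))"
proof -
  interpret prime_power_cyclotomic p n
    using assms by unfold_locales simp_all
  note E = wedderburn_elem_div_exps
  have W: "wedderburn_mat p n \<in> carrier_mat (p ^ n) (p ^ n)" by (simp add: wedderburn_mat_def)
  show ?thesis unfolding elem_div_vals_eq_elem_div_exps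
  proof (intro conjI exI allI impI)
    show "elem_div_exps (Tring p n) (tunif p n) (p ^ n) (wedderburn_mat p n) (wedderburn_exp p)" by (fact E)
    fix e j assume "elem_div_exps (Tring p n) (tunif p n) (p ^ n) (wedderburn_mat p n) e" "j < p ^ n"
    then have "e j = wedderburn_exp p j"
      by (rule elem_div_exps_unique[OF tunif_mem tunif_nonzero inverse_tunif_notin W _ E])
    then show "int (e j) = (\<Sum>k\<le>n. (int (digit p j k) - int (digit p j (Suc k))) * int (k + 1) * int p ^ k)"
      using wedderburn_exp_digits[OF p_gt_1 \<open>j < p ^ n\<close>] by simp
  qed
qed

end
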